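(* Let $H$ be a Hintikka formula of $\mathbf{L_1}$, let $C_1\neq C_2$ be chains of $H$, and let $b$ be a tail of $C_1$. Then $b\notin C_2$.
   Context: Formulas of $\mathbf{L_1}$: built from atomic formulas $\epsilon ab$ ($a,b$ name variables, possibly equal) with primitive connectives $\vee,\sim$. Positive/negative parts (occurrences): $A$ is a positive part of $A$; if $B\vee C$ is a positive part then $B,C$ are positive parts; if $\sim B$ is a positive part then $B$ is a negative part; if $\sim B$ is a negative part then $B$ is a positive part. $F[B_+,B_-]$ denotes a formula in which some formula $B$ has one occurrence as positive part and another non-overlapping occurrence as negative part. Hintikka formula: a formula $H$ such that (1) $H$ is not of the form $F[B_+,B_-]$; (2) if $B\vee C$ is a negative part of $H$ then $B$ or $C$ is; (3) if $\epsilon ab$ is a negative part then so is $\epsilon aa$; (4) if $\epsilon ab,\epsilon bc$ are negative parts then so is $\epsilon ac$; (5) if $\epsilon ab,\epsilon bb$ are negative parts then so is $\epsilon ba$. Chain of a Hintikka formula $H$: a nonempty finite set $C$ of name variables such that for all $a_i,a_j\in C$ (including $a_i=a_j$) both $\epsilon a_ia_j$ and $\epsilon a_ja_i$ occur as negative parts of $H$, and $C$ is maximal with this property. Tail of a chain $C$: a name variable $b\notin C$ such that $\epsilon ab$ is a negative part of $H$ for some $a\in C$. *)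

theory Defs
  imports Main
begin

datatype 'n fml = Eps 'n 'n | Disj "'n fml" "'n fml" | Neg "'n fml"

inductive pos_part :: "'n fml \<Rightarrow> 'n fml \<Rightarrow> bool"
  and neg_part :: "'n fml \<Rightarrow> 'n fml \<Rightarrow> bool"
  for H :: "'n fml" where
  pos_self: "pos_part H H"
| pos_disjL: "pos_part H (Disj B C) \<Longrightarrow> pos_part H B"
| pos_disjR: "pos_part H (Disj B C) \<Longrightarrow> pos_part H C"
| pos_neg: "pos_part H (Neg B) \<Longrightarrow> neg_part H B"
| neg_neg: "neg_part H (Neg B) \<Longrightarrow> pos_part H B"

text \<open>H is of the form F[B+,B-]: some formula B occurs both as a positive part
  and as a negative part (such occurrences are automatically distinct and non-overlapping).\<close>
definition has_pos_neg :: "'n fml \<Rightarrow> bool" where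
  "has_pos_neg H \<longleftrightarrow> (\<exists>B. pos_part H B \<and> neg_part H B)"

definition hintikka :: "'n fml \<Rightarrow> bool" where
  "hintikka H \<longleftrightarrow>
     \<not> has_pos_neg H
   \<and> (\<forall>B C. neg_part H (Disj B C) \<longrightarrow> neg_part H B \<or> neg_part H C)
   \<and> (\<forall>a b. neg_part H (Eps a b) \<longrightarrow> neg_part H (Eps a a))
   \<and> (\<forall>a b c. neg_part H (Eps a b) \<and> neg_part H (Eps b c) \<longrightarrow> neg_part H (Eps a c))
   \<and> (\<forall>a b. neg_part H (Eps a b) \<and> neg_part H (Eps b b) \<longrightarrow> neg_part H (Eps b a))"

definition chain_prop :: "'n fml \<Rightarrow> 'n set \<Rightarrow> bool" where
  "chain_prop H C \<longleftrightarrow> finite C \<and> C \<noteq> {} \<and>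
     (\<forall>ai\<in>C. \<forall>aj\<in>C. neg_part H (Eps ai aj) \<and> neg_part H (Eps aj ai))"

definition is_chain :: "'n fml \<Rightarrow> 'n set \<Rightarrow> bool" where
  "is_chain H C \<longleftrightarrow> chain_prop H C \<and> (\<forall>D. chain_prop H D \<and> C \<subseteq> D \<longrightarrow> D = C)"

definition is_tail :: "'n fml \<Rightarrow> 'n set \<Rightarrow> 'n \<Rightarrow> bool" where
  "is_tail H C b \<longleftrightarrow> b \<notin> C \<and> (\<exists>a\<in>C. neg_part H (Eps a b))"

end

theory Submission
  imports Defs
begin

text \<open>If a tail b of the chain C1 lay in another chain C2, then by condition (5) of a Hintikka
  formula the link from C1 to b would run in both directions, and transitivity would make
  C1 \<union> C2 a chain-like set. Maximality of both chains then forces C1 = C1 \<union> C2 = C2.\<close>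

lemma hintikka_neg_Eps_trans:
  assumes "hintikka H" "neg_part H (Eps a b)" "neg_part H (Eps b c)"
  shows "neg_part H (Eps a c)"
  using assms unfolding hintikka_def by blast

lemma hintikka_neg_Eps_sym:
  assumes "hintikka H" "neg_part H (Eps a b)" "neg_part H (Eps b b)"
  shows "neg_part H (Eps b a)"
  using assms unfolding hintikka_def by blast

lemma chain_prop_Un:
  assumes H: "hintikka H"
    and C: "chain_prop H C" and D: "chain_prop H D"
    and "a \<in> C" "b \<in> D" and ab: "neg_part H (Eps a b)"
  shows "chain_prop H (C \<union> D)"
proof -
  have inC: "neg_part H (Eps x y)" if "x \<in> C" "y \<in> C" for x y
    using C that unfolding chain_prop_def by blast
  have inD: "neg_part H (Eps x y)" if "x \<in> D" "y \<in> D" for x y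
    using D that unfolding chain_prop_def by blast
  have ba: "neg_part H (Eps b a)"
    using hintikka_neg_Eps_sym[OF H ab inD[OF \<open>b \<in> D\<close> \<open>b \<in> D\<close>]] .
  have CD: "neg_part H (Eps x y)" if "x \<in> C" "y \<in> D" for x y
    using hintikka_neg_Eps_trans[OF H inC[OF \<open>x \<in> C\<close> \<open>a \<in> C\<close>]
        hintikka_neg_Eps_trans[OF H ab inD[OF \<open>b \<in> D\<close> \<open>y \<in> D\<close>]]] .
  have DC: "neg_part H (Eps x y)" if "x \<in> D" "y \<in> C" for x y
    using hintikka_neg_Eps_trans[OF H inD[OF \<open>x \<in> D\<close> \<open>b \<in> D\<close>]
        hintikka_neg_Eps_trans[OF H ba inC[OF \<open>a \<in> C\<close> \<open>y \<in> C\<close>]]] .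
  have "neg_part H (Eps x y)" if "x \<in> C \<union> D" "y \<in> C \<union> D" for x y
    using that inC inD CD DC by blast
  then show ?thesis
    using C D unfolding chain_prop_def by blast
qed

lemma is_chain_eq_if_neg_Eps:
  assumes "hintikka H" "is_chain H C" "is_chain H D"
    and "a \<in> C" "b \<in> D" "neg_part H (Eps a b)"
  shows "C = D"
proof -
  have "chain_prop H C" "chain_prop H D"
    using assms(2,3) unfolding is_chain_def by blast+
  with assms(1,4-6) have "chain_prop H (C \<union> D)"
    by (intro chain_prop_Un)
  then have "C \<union> D = C" and "C \<union> D = D"
    using assms(2,3) unfolding is_chain_def by blast+
  then show ?thesis by simp
qed

theorem proposition5p1:
  fixes H :: "'n fml" and C1 C2 :: "'n set" and b :: 'n
  assumes "hintikka H"
    and "is_chain H C1" and "is_chain H C2" and "C1 \<noteq> C2"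
    and "is_tail H C1 b"
  shows "b \<notin> C2"
proof
  assume "b \<in> C2"
  obtain a where "a \<in> C1" and "neg_part H (Eps a b)"
    using assms(5) unfolding is_tail_def by blast
  then have "C1 = C2"
    using is_chain_eq_if_neg_Eps[OF assms(1-3) \<open>a \<in> C1\<close> \<open>b \<in> C2\<close>] by simp
  with assms(4) show False ..
qed

end
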